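(* Let $n\ge 1$ be an integer and let $\mathcal{F}\subseteq\mathbb{Z}_{2^n}$. If $\mathcal{F}$ does not contain a projective $2$-cube, then $|\mathcal{F}|\le |L_1|=2^{n-1}$.
   Context: All arithmetic is in the cyclic group $\mathbb{Z}_{2^n}$. For a multiset $S=\{a_1,\dots,a_d\}$ of $d$ (not necessarily distinct) elements of $\mathbb{Z}_{2^n}$, the projective $d$-cube generated by $S$ is the set $\Sigma^*S=\{\sum_{i\in I}a_i \bmod 2^n:\emptyset\ne I\subseteq[d]\}$. A set $A$ contains a projective $d$-cube if $\Sigma^*S\subseteq A$ for some multiset $S$ of size $d$. Thus a projective $2$-cube is a set $\{a,b,a+b\}$ (with $a=b$ allowed, giving $\{a,2a\}$). Layers: for $1\le i\le n$, $L_i=\{x\in\mathbb{Z}_{2^n}: x\equiv 2^{i-1}\pmod{2^i}\}$, and $L_{n+1}=\{0\}$; so $L_1$ is the set of odd residues. *)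

theory Defs
  imports Main
begin

text \<open>Z_{2^n} is modelled by the residues {0..<2^n} (naturals), addition mod 2^n.
  A multiset S of d elements is modelled by a list of length d.\<close>

definition proj_cube :: "nat \<Rightarrow> nat list \<Rightarrow> nat set" where
  "proj_cube n S = {(\<Sum>i\<in>I. S ! i) mod 2^n | I. I \<noteq> {} \<and> I \<subseteq> {..<length S}}"

definition contains_proj_cube :: "nat \<Rightarrow> nat \<Rightarrow> nat set \<Rightarrow> bool" where
  "contains_proj_cube n d A \<longleftrightarrow>
     (\<exists>S. length S = d \<and> set S \<subseteq> {..<2^n} \<and> proj_cube n S \<subseteq> A)"

definition layer :: "nat \<Rightarrow> nat \<Rightarrow> nat set" where
  "layer n i = (if i = n + 1 then {0}
               else {x \<in> {..<2^n}. x mod 2^i = 2^(i-1)})"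

end

theory Submission
  imports Defs "HOL-Number_Theory.Cong"
begin

text \<open>Fix some a \<in> F. As F contains no projective 2-cube {a, x, a + x}, the translate a + F
  is disjoint from F; translation being a bijection of \<int>/2^n\<int>, this gives 2|F| \<le> 2^n.\<close>

lemma proj_cube_pair: "proj_cube n [a, b] = {a mod 2^n, b mod 2^n, (a + b) mod 2^n}"
proof -
  have "{..<length [a, b]} = {0, 1::nat}" by auto
  then have "{I. I \<noteq> {} \<and> I \<subseteq> {..<length [a, b]}} = {{0}, {1}, {0, 1::nat}}"
    by (auto simp: Pow_insert simp flip: Pow_def)
  then have "proj_cube n [a, b] = (\<lambda>I. (\<Sum>i\<in>I. [a, b] ! i) mod 2^n) ` {{0}, {1}, {0, 1}}"
    unfolding proj_cube_def setcompr_eq_image by simp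
  then show ?thesis by simp
qed

lemma contains_proj_cube_2I:
  assumes "a < 2^n" "b < 2^n" "a \<in> F" "b \<in> F" "(a + b) mod 2^n \<in> F"
  shows "contains_proj_cube n 2 F"
  unfolding contains_proj_cube_def
  by (rule exI[of _ "[a, b]"]) (use assms in \<open>simp add: proj_cube_pair\<close>)

lemma inj_on_add_mod: "inj_on (\<lambda>x. (a + x) mod m) {..<(m::nat)}"
proof
  fix x y assume "x \<in> {..<m}" "y \<in> {..<m}" "(a + x) mod m = (a + y) mod m"
  then show "x = y"
    by (metis cong_def cong_add_lcancel_nat lessThan_iff mod_less)
qed

lemma card_le_half_if_disjoint_translate:
  fixes A :: "nat set"
  assumes "A \<subseteq> {..<m}" and "A \<inter> (\<lambda>x. (a + x) mod m) ` A = {}"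
  shows "2 * card A \<le> m"
proof -
  let ?t = "\<lambda>x. (a + x) mod m"
  have fin: "finite A" using assms(1) finite_subset by blast
  show ?thesis
  proof (cases "m = 0")
    case False
    have "card (?t ` A) = card A"
      using card_image inj_on_subset[OF inj_on_add_mod assms(1)] by blast
    then have "2 * card A = card (A \<union> ?t ` A)"
      using card_Un_disjoint[OF fin finite_imageI[OF fin] assms(2)] by simp
    also have "\<dots> \<le> card {..<m}"
      by (rule card_mono) (use assms(1) False in auto)
    finally show ?thesis by simp
  qed (use assms(1) in simp)
qed

lemma card_layer_1:
  assumes "n \<ge> 1"
  shows "card (layer n 1) = 2^(n-1)"
proof -
  obtain m where m: "n = Suc m" using assms by (cases n) auto
  have "layer n 1 = (\<lambda>k. 2 * k + 1) ` {..<2^m}"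
  proof (rule set_eqI)
    fix x :: nat
    have "x \<in> layer n 1 \<longleftrightarrow> x < 2 * 2^m \<and> odd x"
      using m by (auto simp: layer_def odd_iff_mod_2_eq_one)
    also have "\<dots> \<longleftrightarrow> x \<in> (\<lambda>k. 2 * k + 1) ` {..<2^m}"
      by (auto elim!: oddE)
    finally show "x \<in> layer n 1 \<longleftrightarrow> x \<in> (\<lambda>k. 2 * k + 1) ` {..<2^m}" .
  qed
  moreover have "inj (\<lambda>k::nat. 2 * k + 1)" by (auto simp: inj_def)
  ultimately show ?thesis using m by (simp add: card_image inj_on_subset)
qed

theorem proposition1p5:
  fixes n :: nat and F :: "nat set"
  assumes "n \<ge> 1" and "F \<subseteq> {..<2^n}"
    and "\<not> contains_proj_cube n 2 F"
  shows "card F \<le> card (layer n 1) \<and> card (layer n 1) = 2^(n-1)"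
proof -
  have "2 * card F \<le> 2^n"
  proof (cases "F = {}")
    case False
    then obtain a where a: "a \<in> F" by blast
    have "(a + x) mod 2^n \<notin> F" if "x \<in> F" for x
      using contains_proj_cube_2I[of a n x F] assms(2,3) a that by auto
    then have "F \<inter> (\<lambda>x. (a + x) mod 2^n) ` F = {}" by auto
    with assms(2) show ?thesis by (rule card_le_half_if_disjoint_translate)
  qed simp
  moreover have "(2::nat)^n = 2 * 2^(n-1)"
    using assms(1) by (simp flip: power_Suc)
  ultimately show ?thesis using card_layer_1[OF assms(1)] by simp
qed

end
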